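(* Let ${\mathbb K}$ be a field, $n\geqslant 2$ and $N$ a positive integer. Let $L$ be a set of lines of $\mathrm{AG}_n({\mathbb K})$, let $D\subseteq\mathrm{PG}_{n-1}({\mathbb K})$ be the set of directions of the lines of $L$, and let $S$ be a set of points of $\mathrm{AG}_n({\mathbb K})$ such that every line of $L$ is incident with at least $N$ points of $S$. If $D$ contains an $N^{n-1}$ grid then $$|S|\geqslant\binom{N+n-1}{n}.$$
   Context: The direction of an affine line $\{u+\lambda v:\lambda\in{\mathbb K}\}$ is the point $\langle v\rangle$ of $\mathrm{PG}_{n-1}({\mathbb K})$. An $N^{n-1}$ grid in $\mathrm{PG}_{n-1}({\mathbb K})$ is a point set which, with respect to a suitable basis, has the form $\{\langle(a_1,\ldots,a_{n-1},1)\rangle : a_i\in A_i\}$, where each $A_i\subseteq{\mathbb K}$ has size $N$. *)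

theory Defs
  imports Main
begin

text \<open>Vectors of K^n are represented as functions nat => K vanishing at indices >= n.\<close>

definition vecs :: "nat \<Rightarrow> (nat \<Rightarrow> 'a::field) set" where
  "vecs n = {v. \<forall>i\<ge>n. v i = 0}"

definition aline :: "(nat \<Rightarrow> 'a::field) \<Rightarrow> (nat \<Rightarrow> 'a) \<Rightarrow> (nat \<Rightarrow> 'a) set" where
  "aline u v = {(\<lambda>i. u i + c * v i) | c. True}"

definition is_line :: "nat \<Rightarrow> (nat \<Rightarrow> 'a::field) set \<Rightarrow> bool" where
  "is_line n l \<longleftrightarrow> (\<exists>u v. u \<in> vecs n \<and> v \<in> vecs n \<and> v \<noteq> (\<lambda>_. 0) \<and> l = aline u v)"

definition proj_point :: "(nat \<Rightarrow> 'a::field) \<Rightarrow> (nat \<Rightarrow> 'a) set" where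
  "proj_point v = {(\<lambda>i. c * v i) | c. c \<noteq> 0}"

definition line_dir :: "nat \<Rightarrow> (nat \<Rightarrow> 'a::field) set \<Rightarrow> (nat \<Rightarrow> 'a) set \<Rightarrow> bool" where
  "line_dir n l d \<longleftrightarrow> (\<exists>u v. u \<in> vecs n \<and> v \<in> vecs n \<and> v \<noteq> (\<lambda>_. 0) \<and> l = aline u v \<and> d = proj_point v)"

definition directions :: "nat \<Rightarrow> (nat \<Rightarrow> 'a::field) set set \<Rightarrow> (nat \<Rightarrow> 'a) set set" where
  "directions n L = {d. \<exists>l\<in>L. line_dir n l d}"

definition is_basis :: "nat \<Rightarrow> (nat \<Rightarrow> nat \<Rightarrow> 'a::field) \<Rightarrow> bool" where
  "is_basis n B \<longleftrightarrow> (\<forall>i<n. B i \<in> vecs n) \<and>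
     (\<forall>c. (\<forall>j. (\<Sum>i<n. c i * B i j) = 0) \<longrightarrow> (\<forall>i<n. c i = 0))"

text \<open>An N^(n-1) grid in PG_(n-1)(K): w.r.t. the basis B, the points
  <(a_1,...,a_(n-1),1)> with a_i in A_i, |A_i| = N.\<close>
definition is_grid :: "nat \<Rightarrow> nat \<Rightarrow> (nat \<Rightarrow> 'a::field) set set \<Rightarrow> bool" where
  "is_grid n N G \<longleftrightarrow> (\<exists>B A. is_basis n B \<and>
     (\<forall>i<n-1. finite (A i) \<and> card (A i) = N) \<and>
     G = {proj_point (\<lambda>j. (\<Sum>i<n-1. a i * B i j) + B (n-1) j) | a. \<forall>i<n-1. a i \<in> A i})"

end

theory Submission
  imports Defs "HOL-Computational_Algebra.Polynomial"
begin

text \<open>Suppose \<open>|S| < (N + n - 1 choose n)\<close>. This binomial coefficient counts the monomials of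
  degree at most \<open>N - 1\<close> in \<open>n\<close> variables, so linear algebra gives a nonzero polynomial \<open>f\<close> of
  degree \<open>d < N\<close> vanishing on \<open>S\<close>. On a line \<open>u + t v\<close> of \<open>L\<close>, \<open>f\<close> becomes a polynomial in \<open>t\<close> of
  degree at most \<open>d\<close> with at least \<open>N\<close> roots, hence zero; its coefficient of \<open>t ^ d\<close> is the top
  homogeneous part \<open>f\<^sub>d\<close> evaluated at \<open>v\<close>. So \<open>f\<^sub>d\<close> vanishes at every direction of \<open>L\<close>, and
  in coordinates adapted to the grid, \<open>f\<^sub>d(a, 1)\<close> vanishes on an \<open>N^(n-1)\<close> grid. Since \<open>f\<^sub>d(a, 1)\<close>
  has degree less than \<open>N\<close> in each variable and determines \<open>f\<^sub>d\<close>, this forces \<open>f\<^sub>d = 0\<close>,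
  a contradiction.\<close>

section \<open>Linear algebra over a field\<close>

lemma homogeneous_system_nontrivial_solution:
  fixes M :: "'e \<Rightarrow> 'v \<Rightarrow> 'a::field"
  assumes "finite E" "finite V" "card E < card V"
  shows "\<exists>c. (\<exists>v\<in>V. c v \<noteq> 0) \<and> (\<forall>e\<in>E. (\<Sum>v\<in>V. M e v * c v) = 0)"
  using assms
proof (induction E arbitrary: V M rule: finite_induct)
  case empty
  then obtain v where "v \<in> V" by fastforce
  then show ?case by (intro exI[of _ "\<lambda>_. 1"]) auto
next
  case (insert e E)
  show ?case
  proof (cases "\<forall>v\<in>V. M e v = 0")
    case True
    with insert show ?thesis by auto
  next
    case False
    then obtain v0 where v0: "v0 \<in> V" "M e v0 \<noteq> 0" by auto
    define V' where "V' = V - {v0}"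
    \<comment> \<open>Gaussian elimination of the variable \<open>v0\<close> using the equation \<open>e\<close>.\<close>
    define M' where "M' = (\<lambda>e' v. M e' v - M e' v0 * M e v / M e v0)"
    have "card E < card V'"
      using v0 insert.prems insert.hyps by (simp add: V'_def)
    with insert.IH[of V' M'] insert.prems obtain c' where
      c': "\<exists>v\<in>V'. c' v \<noteq> 0" "\<forall>e\<in>E. (\<Sum>v\<in>V'. M' e v * c' v) = 0"
      by (auto simp: V'_def)
    define c where "c = c'(v0 := - (\<Sum>v\<in>V'. M e v * c' v) / M e v0)"
    have split: "(\<Sum>v\<in>V. f v) = f v0 + (\<Sum>v\<in>V'. f v)" for f :: "'v \<Rightarrow> 'a"
      using v0 insert.prems by (simp add: V'_def sum.remove)
    have c_on_V': "(\<Sum>v\<in>V'. g v * c v) = (\<Sum>v\<in>V'. g v * c' v)" for g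
      by (intro sum.cong) (auto simp: c_def V'_def)
    have "(\<Sum>v\<in>V. M e' v * c v) = 0" if "e' \<in> E" for e'
    proof -
      have "(\<Sum>v\<in>V'. M e' v * c' v) - M e' v0 / M e v0 * (\<Sum>v\<in>V'. M e v * c' v)
          = (\<Sum>v\<in>V'. M' e' v * c' v)"
        by (simp add: M'_def algebra_simps sum_subtractf sum_distrib_left)
      also have "\<dots> = 0" using c' that by auto
      finally show ?thesis using v0 by (simp add: split c_on_V') (simp add: c_def field_simps)
    qed
    moreover have "(\<Sum>v\<in>V. M e v * c v) = 0"
      using v0 by (simp add: split c_on_V') (simp add: c_def)
    moreover have "\<exists>v\<in>V. c v \<noteq> 0" using c' by (auto simp: c_def V'_def)
    ultimately show ?thesis by auto
  qed
qed

lemma basis_coeffs_unique: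
  assumes "is_basis n B" "(\<lambda>j. \<Sum>i<n. t i * B i j) = (\<lambda>j. \<Sum>i<n. s i * B i j)" "i < n"
  shows "t i = s i"
proof -
  have "(\<Sum>i<n. (t i - s i) * B i j) = 0" for j
    using fun_cong[OF assms(2), of j] by (simp add: algebra_simps sum_subtractf)
  then show ?thesis using assms(1,3) unfolding is_basis_def by force
qed

lemma basis_spans_vecs:
  fixes B :: "nat \<Rightarrow> nat \<Rightarrow> 'a::field"
  assumes "is_basis n B" "x \<in> vecs n"
  shows "\<exists>t. x = (\<lambda>j. \<Sum>i<n. t i * B i j)"
proof -
  \<comment> \<open>\<open>B 0, \<dots>, B (n - 1), x\<close> are \<open>n + 1\<close> vectors in \<open>K^n\<close>, hence linearly dependent.\<close>
  define M where "M j i = (if i < n then B i j else x j)" for j i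
  obtain c where c: "\<exists>i\<in>{..<Suc n}. c i \<noteq> 0" "\<forall>j\<in>{..<n}. (\<Sum>i\<in>{..<Suc n}. M j i * c i) = 0"
    using homogeneous_system_nontrivial_solution[of "{..<n}" "{..<Suc n}" M] by auto
  have dependence: "(\<Sum>i<n. c i * B i j) + c n * x j = 0" for j
  proof (cases "j < n")
    case True
    have "(\<Sum>i<n. M j i * c i) = (\<Sum>i<n. c i * B i j)" by (intro sum.cong) (auto simp: M_def)
    then show ?thesis using c(2) True by (simp add: M_def mult.commute)
  next
    case False
    then show ?thesis using assms unfolding is_basis_def vecs_def by simp
  qed
  have "c n \<noteq> 0"
  proof
    assume "c n = 0"
    then have "\<forall>i<n. c i = 0" using dependence assms(1) unfolding is_basis_def by simp
    with c(1) \<open>c n = 0\<close> show False by (auto simp: less_Suc_eq)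
  qed
  have "x j = (\<Sum>i<n. (- c i / c n) * B i j)" for j
  proof -
    have "(\<Sum>i<n. (- c i / c n) * B i j) = - (\<Sum>i<n. c i * B i j) / c n"
      by (simp add: sum_negf sum_divide_distrib)
    also have "\<dots> = x j" using dependence[of j] \<open>c n \<noteq> 0\<close> by (simp add: field_simps add_eq_0_iff2)
    finally show ?thesis by simp
  qed
  then show ?thesis by (intro exI[of _ "\<lambda>i. - c i / c n"]) auto
qed

definition coords :: "nat \<Rightarrow> (nat \<Rightarrow> nat \<Rightarrow> 'a::field) \<Rightarrow> (nat \<Rightarrow> 'a) \<Rightarrow> nat \<Rightarrow> 'a" where
  "coords n B x = (SOME t. x = (\<lambda>j. \<Sum>i<n. t i * B i j))"

lemma coords_expansion:
  assumes "is_basis n B" "x \<in> vecs n"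
  shows "x = (\<lambda>j. \<Sum>i<n. coords n B x i * B i j)"
  using someI_ex[OF basis_spans_vecs[OF assms]] unfolding coords_def .

lemma coords_eqI:
  assumes "is_basis n B" "x = (\<lambda>j. \<Sum>i<n. t i * B i j)" "i < n"
  shows "coords n B x i = t i"
proof -
  have "x \<in> vecs n" using assms(1,2) unfolding is_basis_def vecs_def by auto
  then show ?thesis
    using basis_coeffs_unique[OF assms(1) _ assms(3)] coords_expansion[OF assms(1)] assms(2) by metis
qed

lemma coords_add_scaled:
  assumes "is_basis n B" "u \<in> vecs n" "v \<in> vecs n" "i < n"
  shows "coords n B (\<lambda>j. u j + t * v j) i = coords n B u i + t * coords n B v i"
proof (rule coords_eqI[OF assms(1) _ assms(4)])
  have u: "u j = (\<Sum>i<n. coords n B u i * B i j)" for j using coords_expansion[OF assms(1,2)] by meson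
  have v: "v j = (\<Sum>i<n. coords n B v i * B i j)" for j using coords_expansion[OF assms(1,3)] by meson
  show "(\<lambda>j. u j + t * v j) = (\<lambda>j. \<Sum>i<n. (coords n B u i + t * coords n B v i) * B i j)"
    by (subst u, subst v) (simp add: algebra_simps sum.distrib sum_distrib_left)
qed

lemma coords_scaled:
  assumes "is_basis n B" "v \<in> vecs n" "i < n"
  shows "coords n B (\<lambda>j. k * v j) i = k * coords n B v i"
proof (rule coords_eqI[OF assms(1) _ assms(3)])
  show "(\<lambda>j. k * v j) = (\<lambda>j. \<Sum>i<n. (k * coords n B v i) * B i j)"
    by (subst coords_expansion[OF assms(1,2)]) (simp add: sum_distrib_left mult.assoc)
qed

lemma coords_grid_point:
  assumes "is_basis (Suc m) B" "i < Suc m"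
  shows "coords (Suc m) B (\<lambda>j. (\<Sum>i<m. a i * B i j) + B m j) i = (a(m := 1)) i"
proof (rule coords_eqI[OF assms(1) _ assms(2)])
  have "(\<Sum>i<m. (a(m := 1)) i * B i j) = (\<Sum>i<m. a i * B i j)" for j
    by (intro sum.cong) auto
  then show "(\<lambda>j. (\<Sum>i<m. a i * B i j) + B m j) = (\<lambda>j. \<Sum>i<Suc m. (a(m := 1)) i * B i j)"
    by simp
qed

section \<open>Polynomials in several variables\<close>

definition total_degree :: "nat \<Rightarrow> (nat \<Rightarrow> nat) \<Rightarrow> nat" where
  "total_degree n \<alpha> = (\<Sum>i<n. \<alpha> i)"

definition monomials :: "nat \<Rightarrow> nat \<Rightarrow> (nat \<Rightarrow> nat) set" where
  "monomials n D = {\<alpha>. (\<forall>i\<ge>n. \<alpha> i = 0) \<and> total_degree n \<alpha> \<le> D}"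

definition eval_poly :: "nat \<Rightarrow> (nat \<Rightarrow> nat) set \<Rightarrow> ((nat \<Rightarrow> nat) \<Rightarrow> 'a::comm_semiring_1) \<Rightarrow> (nat \<Rightarrow> 'a) \<Rightarrow> 'a"
  where "eval_poly n M c x = (\<Sum>\<alpha>\<in>M. c \<alpha> * (\<Prod>i<n. x i ^ \<alpha> i))"

lemma monomials_0_vars: "monomials 0 D = {\<lambda>_. 0}"
  by (auto simp: monomials_def total_degree_def)

lemma monomials_0_degree: "monomials n 0 = {\<lambda>_. 0}"
proof -
  have "\<alpha> i = 0" if "\<forall>i\<ge>n. \<alpha> i = 0" "total_degree n \<alpha> = 0" for \<alpha> :: "nat \<Rightarrow> nat" and i
    using that by (cases "i < n") (auto simp: total_degree_def)
  then show ?thesis by (auto simp: monomials_def total_degree_def)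
qed

lemma monomials_Suc_Suc:
  "monomials (Suc n) (Suc D) =
     monomials n (Suc D) \<union> (\<lambda>\<alpha>. \<alpha>(n := Suc (\<alpha> n))) ` monomials (Suc n) D"
proof (intro equalityI subsetI)
  fix \<alpha> assume \<alpha>: "\<alpha> \<in> monomials (Suc n) (Suc D)"
  show "\<alpha> \<in> monomials n (Suc D) \<union> (\<lambda>\<alpha>. \<alpha>(n := Suc (\<alpha> n))) ` monomials (Suc n) D"
  proof (cases "\<alpha> n = 0")
    case True
    have "\<alpha> i = 0" if "n \<le> i" for i
    proof -
      have "i = n \<or> Suc n \<le> i" using that by auto
      then show ?thesis using \<alpha> True by (auto simp: monomials_def)
    qed
    then show ?thesis using \<alpha> True by (auto simp: monomials_def total_degree_def)
  next
    case False
    define \<beta> where "\<beta> = \<alpha>(n := \<alpha> n - 1)"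
    have "(\<Sum>i<n. \<beta> i) = (\<Sum>i<n. \<alpha> i)" by (intro sum.cong) (auto simp: \<beta>_def)
    then have "\<beta> \<in> monomials (Suc n) D"
      using \<alpha> False by (auto simp: monomials_def total_degree_def \<beta>_def)
    moreover have "\<alpha> = \<beta>(n := Suc (\<beta> n))" using False by (auto simp: \<beta>_def)
    ultimately show ?thesis by blast
  qed
next
  fix \<alpha> assume "\<alpha> \<in> monomials n (Suc D) \<union> (\<lambda>\<alpha>. \<alpha>(n := Suc (\<alpha> n))) ` monomials (Suc n) D"
  then show "\<alpha> \<in> monomials (Suc n) (Suc D)"
  proof
    assume "\<alpha> \<in> monomials n (Suc D)"
    then show ?thesis by (auto simp: monomials_def total_degree_def)
  next
    assume "\<alpha> \<in> (\<lambda>\<alpha>. \<alpha>(n := Suc (\<alpha> n))) ` monomials (Suc n) D"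
    then obtain \<beta> where \<beta>: "\<beta> \<in> monomials (Suc n) D" "\<alpha> = \<beta>(n := Suc (\<beta> n))" by auto
    have "(\<Sum>i<n. \<alpha> i) = (\<Sum>i<n. \<beta> i)" by (intro sum.cong) (auto simp: \<beta>)
    then show ?thesis using \<beta> by (auto simp: monomials_def total_degree_def)
  qed
qed

lemma finite_monomials: "finite (monomials n D)"
proof (induction n arbitrary: D)
  case 0
  then show ?case by (simp add: monomials_0_vars)
next
  case (Suc n)
  then show ?case
    by (induction D) (simp_all add: monomials_0_degree monomials_Suc_Suc)
qed

lemma card_monomials: "card (monomials n D) = (D + n) choose n"
proof (induction n arbitrary: D)
  case 0
  then show ?case by (simp add: monomials_0_vars)
next
  case (Suc n)
  show ?case
  proof (induction D)
    case 0
    then show ?case by (simp add: monomials_0_degree)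
  next
    case (Suc D)
    have "monomials n (Suc D) \<inter> (\<lambda>\<alpha>. \<alpha>(n := Suc (\<alpha> n))) ` monomials (Suc n) D = {}"
      by (auto simp: monomials_def)
    moreover have "inj_on (\<lambda>\<alpha>. \<alpha>(n := Suc (\<alpha> n))) (monomials (Suc n) D)"
    proof (rule inj_onI)
      fix x y :: "nat \<Rightarrow> nat" assume "x(n := Suc (x n)) = y(n := Suc (y n))"
      then show "x = y" by (metis fun_upd_idem_iff fun_upd_same fun_upd_upd nat.inject)
    qed
    ultimately have "card (monomials (Suc n) (Suc D)) = (Suc D + n choose n) + (D + Suc n choose Suc n)"
      using Suc.IH \<open>\<And>D. card (monomials n D) = (D + n) choose n\<close>
      by (simp add: monomials_Suc_Suc card_Un_disjoint finite_monomials card_image)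
    then show ?case by simp
  qed
qed

lemma exists_poly_vanishing_with_top_monomial:
  fixes \<phi> :: "'b \<Rightarrow> nat \<Rightarrow> 'a::field"
  assumes "finite S" "card S < card (monomials n D)"
  obtains c \<alpha>0 where "\<alpha>0 \<in> monomials n D" "c \<alpha>0 \<noteq> 0"
    and "\<And>\<alpha>. \<alpha> \<in> monomials n D \<Longrightarrow> c \<alpha> \<noteq> 0 \<Longrightarrow> total_degree n \<alpha> \<le> total_degree n \<alpha>0"
    and "\<And>x. x \<in> S \<Longrightarrow> eval_poly n (monomials n D) c (\<phi> x) = 0"
proof -
  obtain c where "\<exists>\<alpha>\<in>monomials n D. c \<alpha> \<noteq> 0"
    and c: "\<forall>x\<in>S. (\<Sum>\<alpha>\<in>monomials n D. (\<Prod>i<n. \<phi> x i ^ \<alpha> i) * c \<alpha>) = 0"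
    using homogeneous_system_nontrivial_solution[OF assms(1) finite_monomials assms(2),
        of "\<lambda>x \<alpha>. \<Prod>i<n. \<phi> x i ^ \<alpha> i"] by blast
  then obtain \<alpha>1 where "\<alpha>1 \<in> monomials n D" "c \<alpha>1 \<noteq> 0" by blast
  moreover have "total_degree n \<alpha> < Suc D" if "\<alpha> \<in> monomials n D" for \<alpha>
    using that unfolding monomials_def by auto
  ultimately obtain \<alpha>0 where "\<alpha>0 \<in> monomials n D" "c \<alpha>0 \<noteq> 0"
    and "\<And>\<alpha>. \<alpha> \<in> monomials n D \<Longrightarrow> c \<alpha> \<noteq> 0 \<Longrightarrow> total_degree n \<alpha> \<le> total_degree n \<alpha>0"
    using Lattices_Big.ex_has_greatest_nat[of "\<lambda>\<alpha>. \<alpha> \<in> monomials n D \<and> c \<alpha> \<noteq> 0" \<alpha>1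
        "total_degree n" "Suc D"] by auto
  moreover have "eval_poly n (monomials n D) c (\<phi> x) = 0" if "x \<in> S" for x
    using c that by (simp add: eval_poly_def mult.commute)
  ultimately show ?thesis using that by blast
qed

lemma eval_poly_cong: "(\<And>i. i < n \<Longrightarrow> x i = y i) \<Longrightarrow> eval_poly n M c x = eval_poly n M c y"
  by (simp add: eval_poly_def)

lemma eval_poly_homogeneous:
  assumes "\<And>\<alpha>. \<alpha> \<in> M \<Longrightarrow> total_degree n \<alpha> = d"
  shows "eval_poly n M c (\<lambda>i. k * x i) = k ^ d * eval_poly n M c x"
proof -
  have "(\<Prod>i<n. (k * x i) ^ \<alpha> i) = k ^ d * (\<Prod>i<n. x i ^ \<alpha> i)" if "\<alpha> \<in> M" for \<alpha>
  proof -
    have "k ^ d = (\<Prod>i<n. k ^ \<alpha> i)"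
      using assms[OF that] by (simp add: total_degree_def flip: power_sum)
    then show ?thesis by (simp add: power_mult_distrib prod.distrib)
  qed
  then show ?thesis by (simp add: eval_poly_def sum_distrib_left mult_ac)
qed

lemma eval_poly_last_eq_1:
  assumes "x m = 1"
  shows "eval_poly (Suc m) M c x = eval_poly m M c x"
  using assms by (simp add: eval_poly_def)

section \<open>Restriction to a line\<close>

lemma coeff_sums_zero_if_vanishes:
  fixes w :: "'b \<Rightarrow> 'a::idom" and g :: "'b \<Rightarrow> nat"
  assumes "finite F" "\<And>\<beta>. \<beta> \<in> F \<Longrightarrow> g \<beta> < card A"
    and "\<And>x. x \<in> A \<Longrightarrow> (\<Sum>\<beta>\<in>F. w \<beta> * x ^ g \<beta>) = 0"
  shows "(\<Sum>\<beta>\<in>{\<beta>\<in>F. g \<beta> = k}. w \<beta>) = 0"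
proof (cases "F = {}")
  case False
  define p where "p = (\<Sum>\<beta>\<in>F. monom (w \<beta>) (g \<beta>))"
  have "card A > 0" using False assms(2) by fastforce
  then have "degree p < card A"
    unfolding p_def using assms(2) by (intro degree_sum_less) (auto intro: le_less_trans[OF degree_monom_le])
  moreover have "poly p x = poly 0 x" if "x \<in> A" for x
    using assms(3)[OF that] by (simp add: p_def poly_sum poly_monom mult_ac)
  ultimately have "p = 0" using \<open>card A > 0\<close> by (intro poly_eqI_degree) auto
  then have "coeff p k = 0" by simp
  then show ?thesis using assms(1) by (simp add: p_def coeff_sum sum.If_cases Int_def)
qed simp

lemma coeff_mult_top:
  fixes p q :: "'a::comm_ring_1 poly"
  assumes "degree p \<le> m" "degree q \<le> k"
  shows "coeff (p * q) (m + k) = coeff p m * coeff q k"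
proof -
  have "coeff p i * coeff q (m + k - i) = 0" if "i \<le> m + k" "i \<noteq> m" for i
    using that assms by (cases "i < m") (auto simp: coeff_eq_0)
  then have "(\<Sum>i\<in>{..m+k} - {m}. coeff p i * coeff q (m + k - i)) = 0"
    by (intro sum.neutral) auto
  then show ?thesis by (simp add: coeff_mult sum.remove[of _ m])
qed

lemma linear_power_top:
  fixes a b :: "'a::comm_ring_1"
  shows "degree ([:a, b:] ^ k) \<le> k \<and> coeff ([:a, b:] ^ k) k = b ^ k"
proof (induction k)
  case (Suc k)
  have "degree ([:a, b:] ^ Suc k) \<le> degree [:a, b:] + degree ([:a, b:] ^ k)"
    by (simp only: power_Suc) (rule degree_mult_le)
  moreover have "degree [:a, b:] \<le> 1" by simp
  ultimately have "degree ([:a, b:] ^ Suc k) \<le> Suc k"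
    using Suc by linarith
  moreover have "coeff ([:a, b:] ^ Suc k) (Suc k) = b ^ Suc k"
    using Suc coeff_mult_top[of "[:a, b:]" 1 "[:a, b:] ^ k" k] by simp
  ultimately show ?case ..
qed simp

lemma prod_linear_powers_top:
  fixes a b :: "nat \<Rightarrow> 'a::comm_ring_1"
  assumes "finite I"
  shows "degree (\<Prod>i\<in>I. [:a i, b i:] ^ k i) \<le> (\<Sum>i\<in>I. k i) \<and>
         coeff (\<Prod>i\<in>I. [:a i, b i:] ^ k i) (\<Sum>i\<in>I. k i) = (\<Prod>i\<in>I. b i ^ k i)"
  using assms
proof (induction I rule: finite_induct)
  case (insert j I)
  note top_j = linear_power_top[of "a j" "b j" "k j"]
  show ?case
    using insert top_j coeff_mult_top[of "[:a j, b j:] ^ k j" "k j" "\<Prod>i\<in>I. [:a i, b i:] ^ k i"]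
    by (auto intro: order.trans[OF degree_mult_le])
qed simp

text \<open>Restricting a polynomial of degree at most \<open>d\<close> to the line \<open>u + t v\<close> gives a
  univariate polynomial whose coefficient of \<open>t ^ d\<close> is the degree-\<open>d\<close> part evaluated at \<open>v\<close>.\<close>
lemma top_homogeneous_part_vanishes:
  fixes u v :: "nat \<Rightarrow> 'a::idom"
  assumes "finite M" "\<And>\<alpha>. \<alpha> \<in> M \<Longrightarrow> c \<alpha> \<noteq> 0 \<Longrightarrow> total_degree n \<alpha> \<le> d" "d < card R"
    and "\<And>t. t \<in> R \<Longrightarrow> eval_poly n M c (\<lambda>i. u i + t * v i) = 0"
  shows "eval_poly n {\<alpha>\<in>M. total_degree n \<alpha> = d} c v = 0"
proof -
  define P where "P \<alpha> = (\<Prod>i<n. [:u i, v i:] ^ \<alpha> i)" for \<alpha>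
  have P_top: "degree (P \<alpha>) \<le> total_degree n \<alpha>"
    "coeff (P \<alpha>) (total_degree n \<alpha>) = (\<Prod>i<n. v i ^ \<alpha> i)" for \<alpha>
    using prod_linear_powers_top[of "{..<n}" u v \<alpha>] by (simp_all add: P_def total_degree_def)
  define q where "q = (\<Sum>\<alpha>\<in>M. smult (c \<alpha>) (P \<alpha>))"
  have "degree (smult (c \<alpha>) (P \<alpha>)) \<le> d" if "\<alpha> \<in> M" for \<alpha>
    using assms(2)[OF that] P_top(1)[of \<alpha>] by (cases "c \<alpha> = 0") auto
  then have "degree q \<le> d"
    unfolding q_def using assms(1) by (intro degree_sum_le)
  moreover have "poly q t = poly 0 t" if "t \<in> R" for t
    using assms(4)[OF that] by (simp add: q_def P_def eval_poly_def poly_sum poly_prod)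
  ultimately have "q = 0" using assms(3) by (intro poly_eqI_degree[where A = R]) auto
  have "c \<alpha> * coeff (P \<alpha>) d = (if total_degree n \<alpha> = d then c \<alpha> * (\<Prod>i<n. v i ^ \<alpha> i) else 0)"
    if "\<alpha> \<in> M" for \<alpha>
    using assms(2)[OF that] P_top[of \<alpha>] by (cases "c \<alpha> = 0") (auto simp: coeff_eq_0)
  then have "coeff q d = eval_poly n {\<alpha>\<in>M. total_degree n \<alpha> = d} c v"
    using assms(1) by (simp add: q_def coeff_sum eval_poly_def sum.If_cases Int_def)
  with \<open>q = 0\<close> show ?thesis by simp
qed

section \<open>Polynomials vanishing on a grid\<close>

lemma eval_poly_Suc:
  "eval_poly (Suc m) F e (a(m := x)) = (\<Sum>\<beta>\<in>F. (e \<beta> * (\<Prod>i<m. a i ^ \<beta> i)) * x ^ \<beta> m)"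
proof -
  have "(\<Prod>i<m. (a(m := x)) i ^ \<beta> i) = (\<Prod>i<m. a i ^ \<beta> i)" for \<beta>
    by (intro prod.cong) simp_all
  then show ?thesis by (simp add: eval_poly_def mult_ac)
qed

text \<open>Exponent vectors are only required to be determined by their first \<open>m\<close> entries, so that
  the lemma applies directly to the dehomogenisation of a homogeneous polynomial.\<close>
lemma grid_vanishing_coeffs_zero:
  fixes e :: "(nat \<Rightarrow> nat) \<Rightarrow> 'a::idom"
  assumes "finite F"
    and "\<And>\<beta> \<gamma>. \<beta> \<in> F \<Longrightarrow> \<gamma> \<in> F \<Longrightarrow> (\<forall>i<m. \<beta> i = \<gamma> i) \<Longrightarrow> \<beta> = \<gamma>"
    and "\<And>\<beta> i. \<beta> \<in> F \<Longrightarrow> i < m \<Longrightarrow> \<beta> i < N"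
    and "\<And>i. i < m \<Longrightarrow> card (A i) = N"
    and "\<And>a. (\<forall>i<m. a i \<in> A i) \<Longrightarrow> eval_poly m F e a = 0"
    and "\<beta> \<in> F"
  shows "e \<beta> = 0"
  using assms
proof (induction m arbitrary: F)
  case 0
  then have "F = {\<beta>}" by auto
  then show ?case using "0.prems"(5)[of undefined] by (simp add: eval_poly_def)
next
  case (Suc m)
  define Fk where "Fk = {\<gamma>\<in>F. \<gamma> m = \<beta> m}"
  show ?case
  proof (rule Suc.IH[of Fk])
    show "eval_poly m Fk e a = 0" if a: "\<forall>i<m. a i \<in> A i" for a
    proof -
      have "(\<Sum>\<gamma>\<in>F. (e \<gamma> * (\<Prod>i<m. a i ^ \<gamma> i)) * x ^ \<gamma> m) = 0" if "x \<in> A m" for x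
      proof -
        have "\<forall>i<Suc m. (a(m := x)) i \<in> A i" using a that by (auto simp: less_Suc_eq)
        from Suc.prems(5)[OF this] show ?thesis by (simp only: eval_poly_Suc)
      qed
      moreover have "\<gamma> m < card (A m)" if "\<gamma> \<in> F" for \<gamma>
        using Suc.prems(3,4) that by simp
      ultimately show ?thesis
        using coeff_sums_zero_if_vanishes[OF Suc.prems(1), of "\<lambda>\<gamma>. \<gamma> m" "A m"]
        by (simp add: eval_poly_def Fk_def)
    qed
    show "\<gamma> = \<delta>" if "\<gamma> \<in> Fk" "\<delta> \<in> Fk" "\<forall>i<m. \<gamma> i = \<delta> i" for \<gamma> \<delta>
      using Suc.prems(2) that by (auto simp: Fk_def less_Suc_eq)
    show "finite Fk" using Suc.prems(1) by (simp add: Fk_def)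
    show "\<gamma> i < N" if "\<gamma> \<in> Fk" "i < m" for \<gamma> i using Suc.prems(3) that by (simp add: Fk_def)
    show "card (A i) = N" if "i < m" for i using Suc.prems(4) that by simp
    show "\<beta> \<in> Fk" using Suc.prems(6) by (simp add: Fk_def)
  qed
qed

lemma exponents_eqI:
  assumes "\<And>i. i > m \<Longrightarrow> \<alpha> i = 0" "\<And>i. i > m \<Longrightarrow> \<beta> i = 0"
    and "total_degree (Suc m) \<alpha> = total_degree (Suc m) \<beta>" "\<And>i. i < m \<Longrightarrow> \<alpha> i = \<beta> i"
  shows "\<alpha> = \<beta>"
proof
  fix i
  have "(\<Sum>i<m. \<alpha> i) = (\<Sum>i<m. \<beta> i)" using assms(4) by simp
  then have "\<alpha> m = \<beta> m" using assms(3) by (simp add: total_degree_def)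
  then show "\<alpha> i = \<beta> i" using assms by (metis linorder_neqE_nat)
qed

lemma homogeneous_vanishing_on_affine_grid:
  fixes c :: "(nat \<Rightarrow> nat) \<Rightarrow> 'a::idom" and m D d :: nat
  defines "H \<equiv> {\<alpha>\<in>monomials (Suc m) D. total_degree (Suc m) \<alpha> = d}"
  assumes "d < N" "\<And>i. i < m \<Longrightarrow> card (A i) = N"
    and "\<And>a. (\<forall>i<m. a i \<in> A i) \<Longrightarrow> eval_poly (Suc m) H c (a(m := 1)) = 0"
    and "\<alpha> \<in> H"
  shows "c \<alpha> = 0"
proof (rule grid_vanishing_coeffs_zero[of H m N A c])
  show "finite H" unfolding H_def using finite_monomials by simp
  show "\<beta> = \<gamma>" if "\<beta> \<in> H" "\<gamma> \<in> H" "\<forall>i<m. \<beta> i = \<gamma> i" for \<beta> \<gamma>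
    using that by (intro exponents_eqI[of m]) (auto simp: H_def monomials_def)
  show "\<beta> i < N" if "\<beta> \<in> H" "i < m" for \<beta> i
  proof -
    have "\<beta> i \<le> total_degree (Suc m) \<beta>"
      unfolding total_degree_def using that(2) by (intro member_le_sum) auto
    then show ?thesis using assms(2) that(1) by (auto simp: H_def)
  qed
  show "eval_poly m H c a = 0" if "\<forall>i<m. a i \<in> A i" for a
    using assms(4)[OF that] eval_poly_last_eq_1[of "a(m := 1)" m H c]
      eval_poly_cong[of m "a(m := 1)" a H c] by simp
qed (use assms in auto)

lemma homogeneous_part_vanishes_at_line_direction:
  assumes "is_basis n B" "u \<in> vecs n" "v \<in> vecs n" "v \<noteq> (\<lambda>_. 0)"
    and "T \<subseteq> aline u v" "finite T" "d < card T"
    and "finite M" "\<And>\<alpha>. \<alpha> \<in> M \<Longrightarrow> c \<alpha> \<noteq> 0 \<Longrightarrow> total_degree n \<alpha> \<le> d"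
    and "\<And>x. x \<in> T \<Longrightarrow> eval_poly n M c (coords n B x) = 0"
  shows "eval_poly n {\<alpha>\<in>M. total_degree n \<alpha> = d} c (coords n B v) = 0"
proof -
  define f where "f t = (\<lambda>i. u i + t * v i)" for t
  define R where "R = {t. f t \<in> T}"
  have "inj f"
  proof (rule injI)
    fix s t assume "f s = f t"
    obtain i where "v i \<noteq> 0" using assms(4) by auto
    with fun_cong[OF \<open>f s = f t\<close>, of i] show "s = t" by (simp add: f_def)
  qed
  moreover have "T = f ` R" using assms(5) by (auto simp: R_def f_def aline_def)
  ultimately have "card R = card T" by (simp add: card_image inj_on_subset)
  show ?thesis
  proof (rule top_homogeneous_part_vanishes[where R = R and u = "coords n B u"])
    show "d < card R" using assms(7) \<open>card R = card T\<close> by simp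
    show "eval_poly n M c (\<lambda>i. coords n B u i + t * coords n B v i) = 0" if "t \<in> R" for t
    proof -
      have "eval_poly n M c (\<lambda>i. coords n B u i + t * coords n B v i) = eval_poly n M c (coords n B (f t))"
        by (rule eval_poly_cong) (simp add: f_def coords_add_scaled[OF assms(1-3)])
      also have "\<dots> = 0" using assms(10) that by (simp add: R_def)
      finally show ?thesis .
    qed
  qed (use assms in auto)
qed

lemma homogeneous_part_vanishes_at_directions:
  assumes "is_basis n B" "\<forall>l\<in>L. \<exists>T. T \<subseteq> l \<inter> S \<and> finite T \<and> card T = N" "d < N"
    and "finite M" "\<And>\<alpha>. \<alpha> \<in> M \<Longrightarrow> c \<alpha> \<noteq> 0 \<Longrightarrow> total_degree n \<alpha> \<le> d"
    and "\<And>x. x \<in> S \<Longrightarrow> eval_poly n M c (coords n B x) = 0"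
    and "proj_point w \<in> directions n L"
  shows "eval_poly n {\<alpha>\<in>M. total_degree n \<alpha> = d} c (coords n B w) = 0"
proof -
  obtain l u v where l: "l \<in> L" "u \<in> vecs n" "v \<in> vecs n" "v \<noteq> (\<lambda>_. 0)" "l = aline u v"
    and "proj_point w = proj_point v"
    using assms(7) unfolding directions_def line_dir_def by blast
  moreover have "w \<in> proj_point w" unfolding proj_point_def by (auto intro!: exI[of _ 1])
  ultimately obtain k where w: "w = (\<lambda>i. k * v i)" unfolding proj_point_def by auto
  obtain T where T: "T \<subseteq> l \<inter> S" "finite T" "card T = N" using assms(2) l(1) by blast
  have "eval_poly n {\<alpha>\<in>M. total_degree n \<alpha> = d} c (coords n B v) = 0"
    using homogeneous_part_vanishes_at_line_direction[OF assms(1) l(2-4) _ T(2) _ assms(4,5)]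
      T assms(3,6) l(5) by auto
  moreover have "eval_poly n {\<alpha>\<in>M. total_degree n \<alpha> = d} c (coords n B w) =
      eval_poly n {\<alpha>\<in>M. total_degree n \<alpha> = d} c (\<lambda>i. k * coords n B v i)"
    unfolding w by (rule eval_poly_cong) (simp add: coords_scaled[OF assms(1) l(3)])
  moreover have "eval_poly n {\<alpha>\<in>M. total_degree n \<alpha> = d} c (\<lambda>i. k * coords n B v i) =
      k ^ d * eval_poly n {\<alpha>\<in>M. total_degree n \<alpha> = d} c (coords n B v)"
    by (rule eval_poly_homogeneous) simp
  ultimately show ?thesis by simp
qed

lemma homogeneous_part_vanishes_at_grid_point:
  assumes "is_basis (Suc m) B" "\<forall>l\<in>L. \<exists>T. T \<subseteq> l \<inter> S \<and> finite T \<and> card T = N" "d < N"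
    and "finite M" "\<And>\<alpha>. \<alpha> \<in> M \<Longrightarrow> c \<alpha> \<noteq> 0 \<Longrightarrow> total_degree (Suc m) \<alpha> \<le> d"
    and "\<And>x. x \<in> S \<Longrightarrow> eval_poly (Suc m) M c (coords (Suc m) B x) = 0"
    and "proj_point (\<lambda>j. (\<Sum>i<m. a i * B i j) + B m j) \<in> directions (Suc m) L"
  shows "eval_poly (Suc m) {\<alpha>\<in>M. total_degree (Suc m) \<alpha> = d} c (a(m := 1)) = 0"
proof -
  have "eval_poly (Suc m) {\<alpha>\<in>M. total_degree (Suc m) \<alpha> = d} c (a(m := 1)) =
      eval_poly (Suc m) {\<alpha>\<in>M. total_degree (Suc m) \<alpha> = d} c
        (coords (Suc m) B (\<lambda>j. (\<Sum>i<m. a i * B i j) + B m j))"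
    by (rule eval_poly_cong) (simp only: coords_grid_point[OF assms(1)])
  also have "\<dots> = 0"
    by (rule homogeneous_part_vanishes_at_directions[OF assms])
  finally show ?thesis .
qed

lemma is_gridE:
  assumes "is_grid (Suc m) N G"
  obtains B A where "is_basis (Suc m) B" "\<And>i. i < m \<Longrightarrow> card (A i) = N"
    and "\<And>a. \<forall>i<m. a i \<in> A i \<Longrightarrow> proj_point (\<lambda>j. (\<Sum>i<m. a i * B i j) + B m j) \<in> G"
proof -
  from assms obtain B A where "is_basis (Suc m) B" "\<forall>i<m. finite (A i) \<and> card (A i) = N"
    and "G = {proj_point (\<lambda>j. (\<Sum>i<m. a i * B i j) + B m j) | a. \<forall>i<m. a i \<in> A i}"
    unfolding is_grid_def by auto
  with that show ?thesis by blast
qed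

theorem theorem3p3:
  fixes L :: "(nat \<Rightarrow> 'a::field) set set" and S :: "(nat \<Rightarrow> 'a) set" and n N :: nat
  assumes "n \<ge> 2" and "N > 0"
    and "\<forall>l\<in>L. is_line n l"
    and "S \<subseteq> vecs n"
    and "\<forall>l\<in>L. \<exists>T. T \<subseteq> l \<inter> S \<and> finite T \<and> card T = N"
    and "\<exists>G. is_grid n N G \<and> G \<subseteq> directions n L"
  shows "infinite S \<or> (N + n - 1) choose n \<le> card S"
proof (rule ccontr)
  obtain m where n: "n = Suc m" using assms(1) by (cases n) auto
  assume "\<not> ?thesis"
  then have "finite S" "card S < card (monomials (Suc m) (N - 1))"
    using assms(2) by (simp_all add: card_monomials n)
  obtain G where G: "is_grid (Suc m) N G" "G \<subseteq> directions (Suc m) L" using assms(6) n by blast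
  obtain B A where B: "is_basis (Suc m) B" and A: "\<And>i. i < m \<Longrightarrow> card (A i) = N"
    and grid: "\<And>a. \<forall>i<m. a i \<in> A i \<Longrightarrow> proj_point (\<lambda>j. (\<Sum>i<m. a i * B i j) + B m j) \<in> G"
    using is_gridE[OF G(1)] by blast
  obtain c \<alpha>0 where \<alpha>0: "\<alpha>0 \<in> monomials (Suc m) (N - 1)" "c \<alpha>0 \<noteq> 0"
    and top: "\<And>\<alpha>. \<alpha> \<in> monomials (Suc m) (N - 1) \<Longrightarrow> c \<alpha> \<noteq> 0 \<Longrightarrow>
      total_degree (Suc m) \<alpha> \<le> total_degree (Suc m) \<alpha>0"
    and vanish: "\<And>x. x \<in> S \<Longrightarrow> eval_poly (Suc m) (monomials (Suc m) (N - 1)) c (coords (Suc m) B x) = 0"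
    by (rule exists_poly_vanishing_with_top_monomial[OF \<open>finite S\<close> \<open>card S < _\<close>]) (rule that)
  define d where "d = total_degree (Suc m) \<alpha>0"
  have "d < N" using \<alpha>0(1) assms(2) by (auto simp: d_def monomials_def)
  have "eval_poly (Suc m) {\<alpha>\<in>monomials (Suc m) (N - 1). total_degree (Suc m) \<alpha> = d} c (a(m := 1)) = 0"
    if "\<forall>i<m. a i \<in> A i" for a
    using homogeneous_part_vanishes_at_grid_point[OF B assms(5) \<open>d < N\<close> finite_monomials
        top[folded d_def] vanish subsetD[OF G(2) grid[OF that]]] .
  from homogeneous_vanishing_on_affine_grid[OF \<open>d < N\<close> A this] \<alpha>0 show False
    by (simp add: d_def)
qed

end
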